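(* Let $\epsilon>0$ and let $\gamma$ be an arclength-parameterized curve in $\mathbb{R}^3$ whose curvature is bounded by $1$, contained in the intersection of two orthogonal slabs of width $\epsilon$, each of which contains the $y$-axis. Then $|\langle T, v\rangle| < 3\sqrt{\epsilon}$ at every point of $\gamma$, where $T$ is the unit tangent vector of $\gamma$ and $v$ is any unit vector perpendicular to $e_2$.
   Context: $e_2$ denotes the unit vector in the direction of the $y$-axis in $\mathbb{R}^3$ with coordinates $(x,y,z)$. A slab of width $\epsilon$ is the closed region between two parallel affine planes at distance $\epsilon$ apart. *)

theory Defs
  imports "HOL-Analysis.Analysis"
begin

text \<open>Unit vector in the direction of the y-axis of R^3 (coordinates x,y,z = components 1,2,3).\<close>
definition e2 :: "real ^ 3" where
  "e2 = axis 2 1"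

definition y_axis :: "(real ^ 3) set" where
  "y_axis = {s *\<^sub>R e2 | s. True}"

definition slab :: "real ^ 3 \<Rightarrow> real \<Rightarrow> real \<Rightarrow> (real ^ 3) set" where
  "slab n c w = {p. c \<le> n \<bullet> p \<and> n \<bullet> p \<le> c + w}"

definition tangent :: "(real \<Rightarrow> real ^ 3) \<Rightarrow> real \<Rightarrow> real ^ 3" where
  "tangent \<gamma> t = vector_derivative \<gamma> (at t)"

definition arclength_curve :: "(real \<Rightarrow> real ^ 3) \<Rightarrow> bool" where
  "arclength_curve \<gamma> \<longleftrightarrow>
     (\<forall>t. \<gamma> differentiable (at t) \<and> norm (tangent \<gamma> t) = 1
          \<and> tangent \<gamma> differentiable (at t))"

definition curvature :: "(real \<Rightarrow> real ^ 3) \<Rightarrow> real \<Rightarrow> real" where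
  "curvature \<gamma> t = norm (vector_derivative (tangent \<gamma>) (at t))"

end

theory Submission
  imports Defs
begin

text \<open>Along an arclength curve with curvature at most \<open>\<kappa>\<close>, the height \<open>n \<bullet> \<gamma>\<close> over a plane with
  unit normal \<open>n\<close> has slope \<open>T \<bullet> n\<close> and second derivative bounded by \<open>\<kappa>\<close>. A function with
  slope \<open>a > 0\<close> and \<open>f'' \<ge> -\<kappa>\<close> still gains \<open>a\<^sup>2/(2\<kappa>)\<close> over the next time \<open>a/\<kappa>\<close>, so
  confinement to a slab of width \<open>\<epsilon>\<close> forces \<open>(T \<bullet> n)\<^sup>2 \<le> 2\<kappa>\<epsilon>\<close>. A slab containing the
  y-axis has its normal orthogonal to \<open>e2\<close>, so the two orthonormal slab normals span the
  plane \<open>e2\<^sup>\<bottom>\<close>; hence for a unit vector \<open>v \<bottom> e2\<close> we get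
  \<open>(T \<bullet> v)\<^sup>2 \<le> (T \<bullet> n1)\<^sup>2 + (T \<bullet> n2)\<^sup>2 \<le> 4\<epsilon> < 9\<epsilon>\<close>.\<close>

lemma deriv_sq_le_of_oscillation_le_pos:
  fixes f f' f'' :: "real \<Rightarrow> real"
  assumes osc: "\<And>s t. f s - f t \<le> w"
    and f: "\<And>t. (f has_real_derivative f' t) (at t)"
    and f': "\<And>t. (f' has_real_derivative f'' t) (at t)"
    and f'': "\<And>t. \<bar>f'' t\<bar> \<le> K" and "K > 0"
    and pos: "f' t0 > 0"
  shows "(f' t0)\<^sup>2 \<le> 2 * K * w"
proof -
  define a where "a = f' t0"
  define d where "d = a / K"
  define diff where "diff = (\<lambda>m::nat. if m = 0 then f else if m = 1 then f' else f'')"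
  have "d > 0" using pos \<open>K > 0\<close> by (simp add: a_def d_def)
  have "\<exists>\<xi>. t0 < \<xi> \<and> \<xi> < t0 + d \<and>
      f (t0 + d) = (\<Sum>m<2. diff m t0 / fact m * (t0 + d - t0) ^ m) + diff 2 \<xi> / fact 2 * (t0 + d - t0)\<^sup>2"
    by (rule Taylor_up) (use f f' \<open>d > 0\<close> in \<open>auto simp: diff_def less_2_cases_iff\<close>)
  then obtain \<xi> where taylor: "f (t0 + d) = f t0 + a * d + f'' \<xi> / 2 * d\<^sup>2"
    by (auto simp: diff_def a_def numeral_2_eq_2)
  have "- K / 2 * d\<^sup>2 \<le> f'' \<xi> / 2 * d\<^sup>2"
    using f''[of \<xi>] by (intro mult_right_mono) auto
  then have "a * d - K / 2 * d\<^sup>2 \<le> f (t0 + d) - f t0"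
    using taylor by simp
  also have "\<dots> \<le> w" by (rule osc)
  finally have "a * d - K / 2 * d\<^sup>2 \<le> w" .
  moreover have "a * d - K / 2 * d\<^sup>2 = a\<^sup>2 / (2 * K)"
    using \<open>K > 0\<close> by (simp add: d_def field_simps power2_eq_square)
  ultimately have "a\<^sup>2 \<le> w * (2 * K)"
    using \<open>K > 0\<close> by (simp add: pos_divide_le_eq)
  then show ?thesis by (simp add: a_def algebra_simps)
qed

lemma deriv_sq_le_of_oscillation_le:
  fixes f f' f'' :: "real \<Rightarrow> real"
  assumes osc: "\<And>s t. f s - f t \<le> w"
    and f: "\<And>t. (f has_real_derivative f' t) (at t)"
    and f': "\<And>t. (f' has_real_derivative f'' t) (at t)"
    and f'': "\<And>t. \<bar>f'' t\<bar> \<le> K" and "K > 0"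
  shows "(f' t0)\<^sup>2 \<le> 2 * K * w"
proof -
  consider "f' t0 > 0" | "f' t0 = 0" | "f' t0 < 0" by linarith
  then show ?thesis
  proof cases
    case 1
    then show ?thesis by (rule deriv_sq_le_of_oscillation_le_pos[OF osc f f' f'' \<open>K > 0\<close>])
  next
    case 2
    have "0 \<le> w" using osc[of t0 t0] by simp
    with 2 \<open>K > 0\<close> show ?thesis by simp
  next
    case 3
    have "(- f' t0)\<^sup>2 \<le> 2 * K * w"
    proof (rule deriv_sq_le_of_oscillation_le_pos[where f = "\<lambda>t. - f t"
          and f' = "\<lambda>t. - f' t" and f'' = "\<lambda>t. - f'' t"])
      show "- f s - - f t \<le> w" for s t using osc[of t s] by simp
    qed (use f f' f'' \<open>K > 0\<close> 3 in \<open>auto intro: derivative_eq_intros\<close>)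
    then show ?thesis by simp
  qed
qed

lemma has_vector_derivative_inner_left:
  "(g has_vector_derivative g') F \<Longrightarrow> ((\<lambda>t. n \<bullet> g t) has_real_derivative n \<bullet> g') F"
  unfolding has_real_derivative_iff_has_vector_derivative
  by (rule bounded_linear.has_vector_derivative[OF bounded_linear_inner_right])

lemma tangent_inner_sq_le_slab_width:
  fixes \<gamma> :: "real \<Rightarrow> real ^ 3"
  assumes \<gamma>: "arclength_curve \<gamma>"
    and curv: "\<And>t. curvature \<gamma> t \<le> \<kappa>" and "\<kappa> > 0"
    and "norm n = 1"
    and slab: "range \<gamma> \<subseteq> slab n c w"
  shows "(tangent \<gamma> t \<bullet> n)\<^sup>2 \<le> 2 * \<kappa> * w"
proof -
  have "(n \<bullet> tangent \<gamma> t)\<^sup>2 \<le> 2 * \<kappa> * w"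
  proof (rule deriv_sq_le_of_oscillation_le[where f' = "\<lambda>s. n \<bullet> tangent \<gamma> s",
        OF _ _ _ _ \<open>\<kappa> > 0\<close>])
    have height: "c \<le> n \<bullet> \<gamma> s \<and> n \<bullet> \<gamma> s \<le> c + w" for s
      using slab unfolding slab_def by blast
    show "n \<bullet> \<gamma> s - n \<bullet> \<gamma> s' \<le> w" for s s'
      using height[of s] height[of s'] by linarith
    show "((\<lambda>s. n \<bullet> \<gamma> s) has_real_derivative n \<bullet> tangent \<gamma> s) (at s)" for s
      using \<gamma> unfolding arclength_curve_def tangent_def
      by (intro has_vector_derivative_inner_left) (simp add: vector_derivative_works[symmetric])
    show "((\<lambda>s. n \<bullet> tangent \<gamma> s) has_real_derivative
            n \<bullet> vector_derivative (tangent \<gamma>) (at s)) (at s)" for s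
      using \<gamma> unfolding arclength_curve_def
      by (intro has_vector_derivative_inner_left) (simp add: vector_derivative_works[symmetric])
    show "\<bar>n \<bullet> vector_derivative (tangent \<gamma>) (at s)\<bar> \<le> \<kappa>" for s
      using Cauchy_Schwarz_ineq2[of n "vector_derivative (tangent \<gamma>) (at s)"] curv[of s] \<open>norm n = 1\<close>
      by (auto simp: curvature_def)
  qed
  then show ?thesis by (simp add: inner_commute)
qed

lemma inner_eq_0_if_line_subset_slab:
  assumes "{s *\<^sub>R u | s. True} \<subseteq> slab n c w"
  shows "n \<bullet> u = 0"
proof (rule ccontr)
  assume "n \<bullet> u \<noteq> 0"
  then have "n \<bullet> (((c + w + 1) / (n \<bullet> u)) *\<^sub>R u) = c + w + 1" by simp
  moreover have "((c + w + 1) / (n \<bullet> u)) *\<^sub>R u \<in> slab n c w" using assms by blast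
  ultimately show False by (simp add: slab_def)
qed

lemma orthonormal_triple_expansion:
  fixes a b u v :: "'a::euclidean_space"
  assumes "DIM('a) = 3"
    and "norm a = 1" "norm b = 1" "norm u = 1" "a \<bullet> b = 0" "a \<bullet> u = 0" "b \<bullet> u = 0"
    and "v \<bullet> u = 0"
  shows "v = (v \<bullet> a) *\<^sub>R a + (v \<bullet> b) *\<^sub>R b"
proof -
  have "pairwise orthogonal {a, b, u}"
    using assms by (auto simp: pairwise_def orthogonal_def inner_commute)
  then have "independent {a, b, u}"
    using assms by (intro pairwise_orthogonal_independent) auto
  moreover have "a \<noteq> b" "a \<noteq> u" "b \<noteq> u"
    using assms by (auto simp: norm_eq_sqrt_inner)
  then have "card {a, b, u} = 3" by simp
  ultimately have span: "UNIV \<subseteq> span {a, b, u}"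
    using assms(1) by (intro card_ge_dim_independent) auto
  define r where "r = v - (v \<bullet> a) *\<^sub>R a - (v \<bullet> b) *\<^sub>R b"
  have orth: "orthogonal r x" if "x \<in> {a, b, u}" for x
    using that assms
    by (auto simp: r_def orthogonal_def inner_diff_left inner_diff_right inner_commute norm_eq_1)
  have "orthogonal r r"
    by (rule orthogonal_to_span[OF _ orth]) (use span in blast)
  then have "r = 0" by (simp add: orthogonal_def)
  then show ?thesis by (simp add: r_def algebra_simps)
qed

lemma inner_sq_le_orthonormal_components:
  fixes a b u v w :: "'a::euclidean_space"
  assumes "DIM('a) = 3"
    and "norm a = 1" "norm b = 1" "norm u = 1" "a \<bullet> b = 0" "a \<bullet> u = 0" "b \<bullet> u = 0"
    and "v \<bullet> u = 0"
  shows "(w \<bullet> v)\<^sup>2 \<le> ((w \<bullet> a)\<^sup>2 + (w \<bullet> b)\<^sup>2) * (norm v)\<^sup>2"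
proof -
  define p where "p = (w \<bullet> a) *\<^sub>R a + (w \<bullet> b) *\<^sub>R b"
  have "w \<bullet> v = p \<bullet> v"
    by (subst (1 2) orthonormal_triple_expansion[OF assms])
      (use assms in \<open>simp add: p_def inner_add_left inner_add_right inner_commute norm_eq_1\<close>)
  then have "(w \<bullet> v)\<^sup>2 = (p \<bullet> v)\<^sup>2" by simp
  also have "\<dots> \<le> (norm p * norm v)\<^sup>2"
    using power_mono[OF Cauchy_Schwarz_ineq2[of p v] abs_ge_zero, of 2] by simp
  also have "(norm p)\<^sup>2 = (w \<bullet> a)\<^sup>2 + (w \<bullet> b)\<^sup>2"
    unfolding power2_norm_eq_inner using assms
    by (simp add: p_def inner_add_left inner_add_right inner_commute norm_eq_1 power2_eq_square)
  then have "(norm p * norm v)\<^sup>2 = ((w \<bullet> a)\<^sup>2 + (w \<bullet> b)\<^sup>2) * (norm v)\<^sup>2"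
    by (simp add: power_mult_distrib)
  finally show ?thesis .
qed

theorem lemma2p5:
  fixes \<gamma> :: "real \<Rightarrow> real ^ 3" and \<epsilon> :: real
    and n1 n2 :: "real ^ 3" and c1 c2 :: real
  assumes "\<epsilon> > 0"
    and "arclength_curve \<gamma>"
    and "\<forall>t. curvature \<gamma> t \<le> 1"
    and "norm n1 = 1" and "norm n2 = 1" and "n1 \<bullet> n2 = 0"
    and "y_axis \<subseteq> slab n1 c1 \<epsilon>" and "y_axis \<subseteq> slab n2 c2 \<epsilon>"
    and "range \<gamma> \<subseteq> slab n1 c1 \<epsilon> \<inter> slab n2 c2 \<epsilon>"
  shows "\<forall>t. \<forall>v :: real ^ 3. norm v = 1 \<and> v \<bullet> e2 = 0 \<longrightarrow>
           \<bar>tangent \<gamma> t \<bullet> v\<bar> < 3 * sqrt \<epsilon>"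
proof (intro allI impI)
  fix t and v :: "real ^ 3"
  assume "norm v = 1 \<and> v \<bullet> e2 = 0"
  then have v: "norm v = 1" "v \<bullet> e2 = 0" by auto
  have slabs: "range \<gamma> \<subseteq> slab n1 c1 \<epsilon>" "range \<gamma> \<subseteq> slab n2 c2 \<epsilon>"
    using assms(9) by auto
  have normals: "n1 \<bullet> e2 = 0" "n2 \<bullet> e2 = 0"
    using assms(7,8) unfolding y_axis_def by (simp_all add: inner_eq_0_if_line_subset_slab)
  have "(tangent \<gamma> t \<bullet> v)\<^sup>2 \<le> ((tangent \<gamma> t \<bullet> n1)\<^sup>2 + (tangent \<gamma> t \<bullet> n2)\<^sup>2) * (norm v)\<^sup>2"
    by (rule inner_sq_le_orthonormal_components)
      (use assms(4-6) normals v in \<open>simp_all add: e2_def\<close>)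
  also have "\<dots> \<le> 2 * 1 * \<epsilon> + 2 * 1 * \<epsilon>"
  proof -
    have "(tangent \<gamma> t \<bullet> n1)\<^sup>2 \<le> 2 * 1 * \<epsilon>" "(tangent \<gamma> t \<bullet> n2)\<^sup>2 \<le> 2 * 1 * \<epsilon>"
      by (rule tangent_inner_sq_le_slab_width; use assms(2-5) slabs in auto)+
    then show ?thesis using v by simp
  qed
  also have "\<dots> < 9 * \<epsilon>"
    using \<open>\<epsilon> > 0\<close> by simp
  also have "\<dots> = (3 * sqrt \<epsilon>)\<^sup>2"
    using \<open>\<epsilon> > 0\<close> by (simp add: power_mult_distrib)
  finally have "\<bar>tangent \<gamma> t \<bullet> v\<bar>\<^sup>2 < (3 * sqrt \<epsilon>)\<^sup>2"
    by simp
  then show "\<bar>tangent \<gamma> t \<bullet> v\<bar> < 3 * sqrt \<epsilon>"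
    by (rule power2_less_imp_less) (use \<open>\<epsilon> > 0\<close> in simp)
qed

end
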